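(* Let $\varepsilon \in (0,1)$ and $\alpha \in \left(0, \frac{1-\varepsilon}{3}\right)$, and let $$U_{\alpha}= \begin{pmatrix} 0 & -1 & \varepsilon & -\alpha \\ \varepsilon & 0 & -1 & -\alpha \\ -1 & \varepsilon & 0 & -\alpha \\ \frac{-1+\varepsilon}{3}+\alpha & \frac{-1+\varepsilon}{3}+\alpha & \frac{-1+\varepsilon}{3}+\alpha & 0 \end{pmatrix}.$$ Then there is a neighborhood $\mathcal{N}$ of $U_\alpha$ in the space of real $4\times 4$ matrices such that, for every $U \in \mathcal{N}$, the symmetric two-player game with payoff matrix $U$ has a unique correlated equilibrium (distribution), namely $e_4 \otimes e_4$, the distribution putting probability one on the strategy profile $(4,4)$.
   Context: A $4\times 4$ matrix $U=(u_{ij})$ defines the symmetric two-player game in which each player has pure strategy set $\{1,2,3,4\}$ and a player using $i$ against an opponent using $j$ gets payoff $u_{ij}$. $e_i$ denotes the $i$-th vertex of the simplex $S_4$ of mixed strategies, and for $x\in S_4$, $x\otimes x$ denotes the product distribution on $\{1,\dots,4\}^2$. Correlated equilibrium is in the sense of Aumann (a distribution on pure strategy profiles). *)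

theory Defs
  imports Complex_Main
begin

text \<open>Strategies are 1,2,3,4. A payoff matrix is a function nat => nat => real,
  of which only the entries with indices in {1..4} matter.
  Player 1 using i against player 2 using j gets U i j; player 2 gets U j i.\<close>

definition strats :: "nat set" where
  "strats = {1..4}"

definition is_profile_dist :: "(nat \<Rightarrow> nat \<Rightarrow> real) \<Rightarrow> bool" where
  "is_profile_dist p \<longleftrightarrow>
     (\<forall>i j. p i j \<ge> 0) \<and>
     (\<forall>i j. (i \<notin> strats \<or> j \<notin> strats) \<longrightarrow> p i j = 0) \<and>
     (\<Sum>i\<in>strats. \<Sum>j\<in>strats. p i j) = 1"

definition sym_correlated_eq :: "(nat \<Rightarrow> nat \<Rightarrow> real) \<Rightarrow> (nat \<Rightarrow> nat \<Rightarrow> real) \<Rightarrow> bool" where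
  "sym_correlated_eq U p \<longleftrightarrow> is_profile_dist p \<and>
     (\<forall>i\<in>strats. \<forall>i'\<in>strats. (\<Sum>j\<in>strats. p i j * (U i j - U i' j)) \<ge> 0) \<and>
     (\<forall>j\<in>strats. \<forall>j'\<in>strats. (\<Sum>i\<in>strats. p i j * (U j i - U j' i)) \<ge> 0)"

definition e44 :: "nat \<Rightarrow> nat \<Rightarrow> real" where
  "e44 i j = (if i = 4 \<and> j = 4 then 1 else 0)"

definition U_alpha :: "real \<Rightarrow> real \<Rightarrow> nat \<Rightarrow> nat \<Rightarrow> real" where
  "U_alpha \<epsilon> \<alpha> i j =
     (if i = 1 then (if j = 1 then 0 else if j = 2 then -1 else if j = 3 then \<epsilon> else -\<alpha>)
      else if i = 2 then (if j = 1 then \<epsilon> else if j = 2 then 0 else if j = 3 then -1 else -\<alpha>)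
      else if i = 3 then (if j = 1 then -1 else if j = 2 then \<epsilon> else if j = 3 then 0 else -\<alpha>)
      else (if j = 4 then 0 else (-1 + \<epsilon>) / 3 + \<alpha>))"

end

theory Submission
  imports Defs
begin

text \<open>The proof exhibits a dual certificate. For a recommended strategy i \<in> {1,2,3} consider the
  incentive constraints against deviating to 4 and to the next strategy of the cycle 1 \<rightarrow> 2 \<rightarrow> 3 \<rightarrow> 1,
  the latter weighted by b with b \<epsilon> = (1 - \<epsilon>)/3 + \<alpha>/2. Summing these constraints of both players,
  every correlated equilibrium p satisfies \<Sum> p i j c i j \<ge> 0 for a coefficient function c that
  vanishes at (4,4) and is at most -\<alpha> elsewhere for U_alpha. Since c depends linearly on U, it stays
  negative off (4,4) near U_alpha, which forces p to be concentrated on (4,4); and e_4 \<otimes> e_4 is an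
  equilibrium because 4 is a strict best reply to 4.\<close>

definition cycle_next :: "nat \<Rightarrow> nat" where
  "cycle_next i = (if i = 1 then 2 else if i = 2 then 3 else 1)"

definition incentive :: "real \<Rightarrow> (nat \<Rightarrow> nat \<Rightarrow> real) \<Rightarrow> nat \<Rightarrow> nat \<Rightarrow> real" where
  "incentive b U i j =
     (if i \<in> {1,2,3} then (U i j - U 4 j) + b * (U i j - U (cycle_next i) j) else 0)"

definition certificate :: "real \<Rightarrow> (nat \<Rightarrow> nat \<Rightarrow> real) \<Rightarrow> nat \<Rightarrow> nat \<Rightarrow> real" where
  "certificate b U i j = incentive b U i j + incentive b U j i"

lemma strats_eq: "strats = {1,2,3,4}"
  by (auto simp: strats_def)

lemma cycle_next_in_strats: "cycle_next i \<in> strats"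
  by (simp add: cycle_next_def strats_eq)


lemma incentive_sum_nonneg:
  assumes "\<forall>i'\<in>strats. 0 \<le> (\<Sum>j\<in>strats. q j * (U i j - U i' j))" "0 \<le> b"
  shows "0 \<le> (\<Sum>j\<in>strats. q j * incentive b U i j)"
proof (cases "i \<in> {1,2,3}")
  case True
  have "(\<Sum>j\<in>strats. q j * incentive b U i j) =
        (\<Sum>j\<in>strats. q j * (U i j - U 4 j)) + b * (\<Sum>j\<in>strats. q j * (U i j - U (cycle_next i) j))"
    using True by (simp add: incentive_def sum_distrib_left algebra_simps flip: sum.distrib)
  also have "\<dots> \<ge> 0"
  proof -
    have "4 \<in> strats"
      by (simp add: strats_eq)
    then show ?thesis
      using assms cycle_next_in_strats[of i] by simp
  qed
  finally show ?thesis .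
qed (simp add: incentive_def)

lemma certificate_sum_nonneg:
  assumes "sym_correlated_eq U p" "0 \<le> b"
  shows "0 \<le> (\<Sum>i\<in>strats. \<Sum>j\<in>strats. p i j * certificate b U i j)"
proof -
  have row: "0 \<le> (\<Sum>j\<in>strats. p i j * incentive b U i j)" if "i \<in> strats" for i
    using assms that by (intro incentive_sum_nonneg) (auto simp: sym_correlated_eq_def)
  have col: "0 \<le> (\<Sum>i\<in>strats. p i j * incentive b U j i)" if "j \<in> strats" for j
    using assms that by (intro incentive_sum_nonneg[where q = "\<lambda>i. p i j"])
      (auto simp: sym_correlated_eq_def)
  have "(\<Sum>i\<in>strats. \<Sum>j\<in>strats. p i j * certificate b U i j) =
        (\<Sum>i\<in>strats. \<Sum>j\<in>strats. p i j * incentive b U i j) +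
        (\<Sum>i\<in>strats. \<Sum>j\<in>strats. p i j * incentive b U j i)"
    by (simp add: certificate_def distrib_left sum.distrib)
  also have "\<dots> = (\<Sum>i\<in>strats. \<Sum>j\<in>strats. p i j * incentive b U i j) +
        (\<Sum>j\<in>strats. \<Sum>i\<in>strats. p i j * incentive b U j i)"
    by (subst (2) sum.swap) (rule refl)
  also have "\<dots> \<ge> 0"
    using row col by (simp add: sum_nonneg)
  finally show ?thesis .
qed


lemma certificate_U_alpha:
  assumes "0 < \<alpha>" "b * \<epsilon> = (1 - \<epsilon>) / 3 + \<alpha> / 2"
    and "i \<in> strats" "j \<in> strats" "(i, j) \<noteq> (4, 4)"
  shows "certificate b (U_alpha \<epsilon> \<alpha>) i j \<le> - \<alpha>"
proof -
  have "\<forall>i\<in>{1,2,3,4::nat}. \<forall>j\<in>{1,2,3,4::nat}. (i, j) \<noteq> (4, 4) \<longrightarrow>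
          certificate b (U_alpha \<epsilon> \<alpha>) i j \<le> - \<alpha>"
    using assms(1,2)
    by (simp add: certificate_def incentive_def cycle_next_def U_alpha_def algebra_simps)
      (auto simp: field_simps)
  then show ?thesis
    using assms(3-5) unfolding strats_eq by blast
qed

lemma certificate_diff:
  "certificate b U i j - certificate b V i j = certificate b (\<lambda>i j. U i j - V i j) i j"
  by (simp add: certificate_def incentive_def algebra_simps)

lemma abs_certificate_le:
  assumes "\<forall>i\<in>strats. \<forall>j\<in>strats. \<bar>W i j\<bar> \<le> d" "0 \<le> b" "i \<in> strats" "j \<in> strats"
  shows "\<bar>certificate b W i j\<bar> \<le> 4 * d * (1 + b)"
proof -
  have "\<bar>incentive b W k l\<bar> \<le> 2 * d * (1 + b)" if "k \<in> strats" "l \<in> strats" for k l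
  proof (cases "k \<in> {1,2,3}")
    case True
    have "4 \<in> strats"
      by (simp add: strats_eq)
    then have W: "\<bar>W k l\<bar> \<le> d" "\<bar>W 4 l\<bar> \<le> d" "\<bar>W (cycle_next k) l\<bar> \<le> d"
      using assms(1) that cycle_next_in_strats by blast+
    have "\<bar>b * (W k l - W (cycle_next k) l)\<bar> \<le> b * (2 * d)"
      using W assms(2) by (simp add: abs_mult mult_left_mono)
    then show ?thesis
      using True W by (simp add: incentive_def algebra_simps)
  next
    case False
    have "0 \<le> d"
      using assms(1,3) by force
    with False show ?thesis
      using assms(2) by (simp add: incentive_def)
  qed
  then have "\<bar>incentive b W i j\<bar> \<le> 2 * d * (1 + b)" "\<bar>incentive b W j i\<bar> \<le> 2 * d * (1 + b)"
    using assms(3,4) by auto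
  then show ?thesis
    using abs_triangle_ineq[of "incentive b W i j" "incentive b W j i"]
    unfolding certificate_def by linarith
qed


lemma weight_zero_where_coefficient_negative:
  fixes f c :: "'a \<Rightarrow> real"
  assumes "finite A" "\<forall>x\<in>A. 0 \<le> f x" "\<forall>x\<in>A. c x \<le> 0" "0 \<le> (\<Sum>x\<in>A. f x * c x)"
    and "a \<in> A" "c a < 0"
  shows "f a = 0"
proof -
  have nonpos: "\<forall>x\<in>A. f x * c x \<le> 0"
    using assms(2,3) by (simp add: mult_nonneg_nonpos)
  then have "(\<Sum>x\<in>A. - (f x * c x)) = 0"
    using assms(4) sum_nonpos[of A "\<lambda>x. f x * c x"] by (simp add: sum_negf)
  then have "f a * c a = 0"
    using sum_nonneg_eq_0_iff[OF assms(1), of "\<lambda>x. - (f x * c x)"] nonpos assms(5) by simp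
  then show ?thesis
    using assms(6) by simp
qed

lemma profile_dist_eq_e44:
  assumes "is_profile_dist p" "\<forall>i\<in>strats. \<forall>j\<in>strats. (i, j) \<noteq> (4, 4) \<longrightarrow> p i j = 0"
  shows "p = e44"
proof (intro ext)
  fix i j
  have "p 4 4 = 1"
    using assms by (simp add: is_profile_dist_def strats_eq)
  then show "p i j = e44 i j"
    using assms by (cases "i \<in> strats \<and> j \<in> strats") (auto simp: is_profile_dist_def e44_def)
qed

lemma sym_correlated_eq_e44_iff:
  "sym_correlated_eq U e44 \<longleftrightarrow> (\<forall>k\<in>strats. U k 4 \<le> U 4 4)"
proof -
  have "(\<Sum>j\<in>strats. e44 i j * (U i j - U i' j)) = (if i = 4 then U 4 4 - U i' 4 else 0)" for i i'
    by (simp add: e44_def strats_eq)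
  moreover have "(\<Sum>i\<in>strats. e44 i j * (U j i - U j' i)) = (if j = 4 then U 4 4 - U j' 4 else 0)"
    for j j'
    by (simp add: e44_def strats_eq)
  moreover have "is_profile_dist e44"
    by (simp add: is_profile_dist_def e44_def strats_eq)
  ultimately show ?thesis
    by (simp add: sym_correlated_eq_def strats_eq)
qed

lemma correlated_eq_unique_if_certificate_negative:
  assumes "sym_correlated_eq U p" "0 \<le> b"
    and "\<forall>i\<in>strats. \<forall>j\<in>strats. (i, j) \<noteq> (4, 4) \<longrightarrow> certificate b U i j < 0"
  shows "p = e44"
proof (rule profile_dist_eq_e44)
  show dist: "is_profile_dist p"
    using assms(1) by (simp add: sym_correlated_eq_def)
  let ?f = "case_prod p" and ?c = "case_prod (certificate b U)"
  have c_nonpos: "\<forall>x\<in>strats \<times> strats. ?c x \<le> 0"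
  proof (clarify)
    fix i j
    assume "i \<in> strats" "j \<in> strats"
    then show "certificate b U i j \<le> 0"
      using assms(3) by (cases "(i, j) = (4, 4)") (auto simp: certificate_def incentive_def less_imp_le)
  qed
  have f_nonneg: "\<forall>x\<in>strats \<times> strats. 0 \<le> ?f x"
    using dist by (auto simp: is_profile_dist_def)
  have "(\<Sum>i\<in>strats. \<Sum>j\<in>strats. p i j * certificate b U i j) = (\<Sum>x\<in>strats \<times> strats. ?f x * ?c x)"
    by (simp add: sum.cartesian_product split_def)
  then have sum_nonneg: "0 \<le> (\<Sum>x\<in>strats \<times> strats. ?f x * ?c x)"
    using certificate_sum_nonneg[OF assms(1,2)] by simp
  show "\<forall>i\<in>strats. \<forall>j\<in>strats. (i, j) \<noteq> (4, 4) \<longrightarrow> p i j = 0"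
  proof (intro ballI impI)
    fix i j
    assume "i \<in> strats" "j \<in> strats" "(i, j) \<noteq> (4, 4)"
    then show "p i j = 0"
      using weight_zero_where_coefficient_negative[OF _ f_nonneg c_nonpos sum_nonneg, of "(i, j)"]
        assms(3) by (simp add: strats_def)
  qed
qed

lemma certificate_negative_near_U_alpha:
  assumes "0 < \<alpha>" "0 \<le> b" "b * \<epsilon> = (1 - \<epsilon>) / 3 + \<alpha> / 2" "4 * \<delta> * (1 + b) < \<alpha>"
    and "\<forall>i\<in>strats. \<forall>j\<in>strats. \<bar>U i j - U_alpha \<epsilon> \<alpha> i j\<bar> \<le> \<delta>"
    and "i \<in> strats" "j \<in> strats" "(i, j) \<noteq> (4, 4)"
  shows "certificate b U i j < 0"
proof -
  have "\<bar>certificate b U i j - certificate b (U_alpha \<epsilon> \<alpha>) i j\<bar> \<le> 4 * \<delta> * (1 + b)"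
    unfolding certificate_diff using assms(2,5-7) by (intro abs_certificate_le) simp_all
  then show ?thesis
    using abs_le_D1 certificate_U_alpha[OF assms(1,3,6-8)] assms(4) by fastforce
qed

lemma best_reply_near_U_alpha:
  assumes "\<forall>i\<in>strats. \<forall>j\<in>strats. \<bar>U i j - U_alpha \<epsilon> \<alpha> i j\<bar> \<le> \<delta>" "2 * \<delta> < \<alpha>"
    and "k \<in> strats"
  shows "U k 4 \<le> U 4 4"
proof -
  have "4 \<in> strats"
    by (simp add: strats_eq)
  then have "\<bar>U k 4 - U_alpha \<epsilon> \<alpha> k 4\<bar> \<le> \<delta>" "\<bar>U 4 4 - U_alpha \<epsilon> \<alpha> 4 4\<bar> \<le> \<delta>"
    using assms(1,3) by blast+
  moreover have "U_alpha \<epsilon> \<alpha> 4 4 = 0" "k \<noteq> 4 \<Longrightarrow> U_alpha \<epsilon> \<alpha> k 4 = - \<alpha>"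
    using assms(3) by (auto simp: strats_eq U_alpha_def)
  ultimately show ?thesis
    using assms(2) by (cases "k = 4") (auto simp: abs_le_iff)
qed

theorem proposition1:
  fixes \<epsilon> \<alpha> :: real
  assumes "0 < \<epsilon>" "\<epsilon> < 1" "0 < \<alpha>" "\<alpha> < (1 - \<epsilon>) / 3"
  shows "\<exists>\<delta>>0. \<forall>U :: nat \<Rightarrow> nat \<Rightarrow> real.
           (\<forall>i\<in>strats. \<forall>j\<in>strats. \<bar>U i j - U_alpha \<epsilon> \<alpha> i j\<bar> < \<delta>) \<longrightarrow>
           (\<forall>p. sym_correlated_eq U p \<longleftrightarrow> p = e44)"
proof -
  define b where "b = ((1 - \<epsilon>) / 3 + \<alpha> / 2) / \<epsilon>"
  define \<delta> where "\<delta> = \<alpha> / (8 * (1 + b))"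
  have b: "0 \<le> b" "b * \<epsilon> = (1 - \<epsilon>) / 3 + \<alpha> / 2"
    using assms by (auto simp: b_def)
  have \<delta>_pos: "0 < \<delta>" and \<delta>_scale: "4 * \<delta> * (1 + b) = \<alpha> / 2"
    using assms(3) b(1) by (simp_all add: \<delta>_def field_simps)
  have "\<delta> \<le> \<delta> * (1 + b)"
    using \<delta>_pos b(1) by simp
  then have \<delta>_small: "2 * \<delta> < \<alpha>"
    using \<delta>_pos \<delta>_scale by linarith
  have "sym_correlated_eq U p \<longleftrightarrow> p = e44"
    if "\<forall>i\<in>strats. \<forall>j\<in>strats. \<bar>U i j - U_alpha \<epsilon> \<alpha> i j\<bar> < \<delta>" for U p
  proof -
    have near: "\<forall>i\<in>strats. \<forall>j\<in>strats. \<bar>U i j - U_alpha \<epsilon> \<alpha> i j\<bar> \<le> \<delta>"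
      using that by (simp add: less_imp_le)
    have "4 * \<delta> * (1 + b) < \<alpha>"
      using \<delta>_scale assms(3) by linarith
    then show ?thesis
      using correlated_eq_unique_if_certificate_negative[OF _ b(1)]
        certificate_negative_near_U_alpha[OF assms(3) b _ near]
        best_reply_near_U_alpha[OF near \<delta>_small] sym_correlated_eq_e44_iff[of U] by auto
  qed
  then show ?thesis
    using \<delta>_pos by blast
qed

end
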